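(* Let $k$ be a field, $R=k[x,y]$, $I=(x^d,y^d,x^by^{d-b})$ with $d\ge2$, $1\le b\le d-1$, $\gcd(d,b)=1$, and $J=(x^d,y^d)$. Then for every $\ell\ge1$ there exist nonnegative integers $s_\ell,t_\ell$ with $$JI^{\ell-1}:I^\ell=(x^{s_\ell},y^{t_\ell}).$$ *)

theory Defs
  imports "HOL-Computational_Algebra.Polynomial"
begin

definition is_ideal :: "'a::comm_ring_1 set \<Rightarrow> bool" where
  "is_ideal I \<longleftrightarrow> 0 \<in> I \<and> (\<forall>a\<in>I. \<forall>b\<in>I. a + b \<in> I) \<and> (\<forall>r. \<forall>a\<in>I. r * a \<in> I)"

definition ideal_gen :: "'a::comm_ring_1 set \<Rightarrow> 'a set" where
  "ideal_gen S = \<Inter>{I. is_ideal I \<and> S \<subseteq> I}"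

definition ideal_mult :: "'a::comm_ring_1 set \<Rightarrow> 'a set \<Rightarrow> 'a set" where
  "ideal_mult I K = ideal_gen {a * b | a b. a \<in> I \<and> b \<in> K}"

primrec ideal_pow :: "'a::comm_ring_1 set \<Rightarrow> nat \<Rightarrow> 'a set" where
  "ideal_pow I 0 = UNIV"
| "ideal_pow I (Suc n) = ideal_mult I (ideal_pow I n)"

definition ideal_colon :: "'a::comm_ring_1 set \<Rightarrow> 'a set \<Rightarrow> 'a set" where
  "ideal_colon I K = {f. \<forall>g\<in>K. f * g \<in> I}"

text \<open>k[x,y] is modelled as (k[x])[y], i.e. type 'a poly poly.\<close>

definition var_x :: "'a::comm_ring_1 poly poly" where
  "var_x = [:[:0, 1:]:]"

definition var_y :: "'a::comm_ring_1 poly poly" where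
  "var_y = [:0, 1:]"

end

theory Submission
  imports Defs
begin

(* All ideals involved are monomial ideals of k[x,y].  Writing MI S for the set
   of polynomials all of whose monomials x^i y^j dominate some exponent in S, we show
     MI S = ideal generated by the monomials of S,   MI S * MI T = MI (S + T),
   so that I^n = MI (P n) and J I^n = MI (E + P n) for explicit exponent sets: E the
   exponents of J and P n = {(d i + b k, d j + (d-b) k) | i + j + k = n}.
   Every generator of J I^(l-1) has total degree d l, and the generators of I^l are
   those of J I^(l-1) together with the single monomial m = x^(bl) y^((d-b)l).  Hence
   J I^(l-1) : I^l = J I^(l-1) : m, and for a monomial ideal generated in one degree the
   colon by a monomial of the same degree is generated by the shifted exponents, which
   all lie on the two coordinate axes; such an ideal is (x^s, y^t).
   Existence of s and t needs only b <= d; the remaining hypotheses (notably coprimality)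
   matter only for the explicit values of s and t, which the statement does not fix. *)

section \<open>Monomials in k[x,y]\<close>

definition mon :: "nat \<Rightarrow> nat \<Rightarrow> 'a::comm_ring_1 poly poly" where
  "mon i j = monom (monom 1 i) j"

lemma mon_mult: "mon i j * mon i' j' = (mon (i + i') (j + j') :: 'a::comm_ring_1 poly poly)"
  by (simp add: mon_def mult_monom)

lemma var_x_pow: "(var_x :: 'a::comm_ring_1 poly poly) ^ i = mon i 0"
  by (simp add: var_x_def mon_def monom_0 poly_const_pow monom_altdef)

lemma var_y_pow: "(var_y :: 'a::comm_ring_1 poly poly) ^ j = mon 0 j"
proof -
  have y: "(var_y :: 'a poly poly) = monom 1 1"
    by (simp add: var_y_def monom_Suc monom_0 one_pCons)
  show ?thesis
    unfolding y mon_def monom_power by simp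
qed

lemma coeff_mult_mon:
  "coeff (coeff (f * mon a c) j) i =
     (if a \<le> i \<and> c \<le> j then coeff (coeff f (j - c)) (i - a) else 0)"
  by (simp add: mon_def mult.commute[of f] coeff_monom_mult)

lemma coeff_mult_nonzero:
  fixes p q :: "'a::comm_ring_1 poly poly"
  assumes "coeff (coeff (p * q) j) i \<noteq> 0"
  obtains i1 j1 i2 j2 where "i = i1 + i2" "j = j1 + j2"
    "coeff (coeff p j1) i1 \<noteq> 0" "coeff (coeff q j2) i2 \<noteq> 0"
proof -
  have "coeff (coeff (p * q) j) i =
      (\<Sum>j1\<le>j. \<Sum>i1\<le>i. coeff (coeff p j1) i1 * coeff (coeff q (j - j1)) (i - i1))"
    by (simp add: coeff_mult coeff_sum)
  with assms obtain j1 where "j1 \<le> j"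
    and "(\<Sum>i1\<le>i. coeff (coeff p j1) i1 * coeff (coeff q (j - j1)) (i - i1)) \<noteq> 0"
    by (metis (no_types, lifting) atMost_iff sum.neutral)
  moreover from this obtain i1 where "i1 \<le> i"
    and "coeff (coeff p j1) i1 * coeff (coeff q (j - j1)) (i - i1) \<noteq> 0"
    by (metis (no_types, lifting) atMost_iff sum.neutral)
  ultimately show thesis
    by (intro that[of i1 "i - i1" j1 "j - j1"]) auto
qed

lemma ideal_gen_ideal: "is_ideal (ideal_gen S)"
  unfolding ideal_gen_def is_ideal_def by auto

lemma ideal_gen_least: "is_ideal K \<Longrightarrow> S \<subseteq> K \<Longrightarrow> ideal_gen S \<subseteq> K"
  unfolding ideal_gen_def by auto

lemma ideal_gen_base: "x \<in> S \<Longrightarrow> x \<in> ideal_gen S"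
  unfolding ideal_gen_def by auto

lemma ideal_mult_ideal: "is_ideal (ideal_mult A B)"
  unfolding ideal_mult_def by (rule ideal_gen_ideal)

lemma ideal_mult_in: "a \<in> A \<Longrightarrow> c \<in> B \<Longrightarrow> a * c \<in> ideal_mult A B"
  unfolding ideal_mult_def by (rule ideal_gen_base) blast

lemma ideal_mult_left: "is_ideal K \<Longrightarrow> a \<in> K \<Longrightarrow> r * a \<in> K"
  unfolding is_ideal_def by blast

lemma ideal_sum:
  assumes "is_ideal K" "finite A" "\<And>x. x \<in> A \<Longrightarrow> f x \<in> K"
  shows "sum f A \<in> K"
  using assms(2,3) by (induction A rule: finite_induct) (use assms(1) in \<open>auto simp: is_ideal_def\<close>)

lemma multiplier_ideal: "is_ideal K \<Longrightarrow> is_ideal {h. c * h \<in> K}"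
  unfolding is_ideal_def by (auto simp: distrib_left mult.left_commute)

lemma ideal_colon_gen_iff:
  assumes "is_ideal K"
  shows "f \<in> ideal_colon K (ideal_gen S) \<longleftrightarrow> (\<forall>g\<in>S. f * g \<in> K)"
proof
  assume "\<forall>g\<in>S. f * g \<in> K"
  then have "ideal_gen S \<subseteq> {h. f * h \<in> K}"
    by (intro ideal_gen_least multiplier_ideal assms) auto
  then show "f \<in> ideal_colon K (ideal_gen S)"
    by (auto simp: ideal_colon_def)
qed (auto simp: ideal_colon_def intro: ideal_gen_base)

section \<open>Monomial ideals\<close>

definition upset :: "(nat \<times> nat) set \<Rightarrow> (nat \<times> nat) set" where
  "upset S = {(i, j). \<exists>a c. (a, c) \<in> S \<and> a \<le> i \<and> c \<le> j}"

definition MI :: "(nat \<times> nat) set \<Rightarrow> 'a::comm_ring_1 poly poly set" where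
  "MI S = {f. \<forall>i j. coeff (coeff f j) i \<noteq> 0 \<longrightarrow> (i, j) \<in> upset S}"

lemma upset_base: "(a, c) \<in> S \<Longrightarrow> (a, c) \<in> upset S"
  unfolding upset_def by blast

text \<open>Up-sets are closed upwards, so upset S is the least up-set containing S.\<close>

lemma upset_least:
  assumes "\<And>p q. (p, q) \<in> S \<Longrightarrow> (p, q) \<in> upset S'"
  shows "upset S \<subseteq> upset S'"
proof
  fix u assume "u \<in> upset S"
  then obtain i j p q where "u = (i, j)" "(p, q) \<in> S" "p \<le> i" "q \<le> j"
    unfolding upset_def by blast
  moreover from this obtain a c where "(a, c) \<in> S'" "a \<le> p" "c \<le> q"
    using assms unfolding upset_def by blast
  ultimately show "u \<in> upset S'"
    unfolding upset_def by (auto intro: le_trans)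
qed

definition exp_sum :: "(nat \<times> nat) set \<Rightarrow> (nat \<times> nat) set \<Rightarrow> (nat \<times> nat) set" where
  "exp_sum S T = {(a + a', c + c') | a c a' c'. (a, c) \<in> S \<and> (a', c') \<in> T}"

lemma exp_sumI: "(a, c) \<in> S \<Longrightarrow> (a', c') \<in> T \<Longrightarrow> (a + a', c + c') \<in> exp_sum S T"
  unfolding exp_sum_def by blast

lemma MI_ideal: "is_ideal (MI S :: 'a::comm_ring_1 poly poly set)"
  unfolding is_ideal_def
proof (intro conjI ballI allI)
  fix f g :: "'a poly poly"
  assume "f \<in> MI S" "g \<in> MI S"
  moreover have "coeff (coeff f j) i \<noteq> 0 \<or> coeff (coeff g j) i \<noteq> 0"
    if "coeff (coeff (f + g) j) i \<noteq> 0" for i j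
    using that by auto
  ultimately show "f + g \<in> MI S"
    unfolding MI_def by blast
next
  fix r f :: "'a poly poly"
  assume f: "f \<in> MI S"
  show "r * f \<in> MI S"
    unfolding MI_def
  proof (intro CollectI allI impI)
    fix i j
    assume "coeff (coeff (r * f) j) i \<noteq> 0"
    then obtain i1 j1 i2 j2 where "i = i1 + i2" "j = j1 + j2" "coeff (coeff f j2) i2 \<noteq> 0"
      by (rule coeff_mult_nonzero)
    with f show "(i, j) \<in> upset S"
      unfolding MI_def upset_def by fastforce
  qed
qed (simp add: MI_def)

lemma mon_in_MI: "(a, c) \<in> S \<Longrightarrow> mon a c \<in> MI S"
  by (auto simp: MI_def mon_def upset_def)

lemma MI_unit: "MI {(0, 0)} = UNIV"
  by (auto simp: MI_def upset_def)

text \<open>A monomial ideal is generated by the monomials of its exponent set: decompose a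
  polynomial into its terms, each of which is a multiple of a generator.\<close>

lemma MI_eq_gen: "(MI S :: 'a::comm_ring_1 poly poly set) = ideal_gen ((\<lambda>(a, c). mon a c) ` S)"
proof
  let ?G = "ideal_gen ((\<lambda>(a, c). mon a c) ` S) :: 'a poly poly set"
  show "?G \<subseteq> MI S"
    by (intro ideal_gen_least MI_ideal) (auto intro: mon_in_MI)
  show "MI S \<subseteq> ?G"
  proof
    fix f :: "'a poly poly"
    assume f: "f \<in> MI S"
    have term_in: "monom (monom (coeff (coeff f j) i) i) j \<in> ?G" for i j
    proof (cases "coeff (coeff f j) i = 0")
      case False
      then obtain a c where ac: "(a, c) \<in> S" "a \<le> i" "c \<le> j"
        using f unfolding MI_def upset_def by blast
      then have "monom (monom (coeff (coeff f j) i) 0) 0 * mon (i - a) (j - c) * mon a c \<in> ?G"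
        by (intro ideal_mult_left[OF ideal_gen_ideal] ideal_gen_base) force
      with ac show ?thesis
        by (simp add: mon_mult mult.assoc) (simp add: mon_def mult_monom)
    qed (simp add: ideal_gen_ideal[unfolded is_ideal_def])
    have "f = (\<Sum>j\<le>degree f. \<Sum>i\<le>degree (coeff f j). monom (monom (coeff (coeff f j) i) i) j)"
      by (subst poly_as_sum_of_monoms[symmetric], intro sum.cong refl)
        (simp add: monom_sum[symmetric] poly_as_sum_of_monoms)
    also have "\<dots> \<in> ?G"
      by (intro ideal_sum ideal_gen_ideal finite_atMost term_in)
    finally show "f \<in> ?G" .
  qed
qed

lemma MI_mult_elements:
  fixes p q :: "'a::comm_ring_1 poly poly"
  assumes "p \<in> MI S" "q \<in> MI T"
  shows "p * q \<in> MI (exp_sum S T)"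
  unfolding MI_def
proof (intro CollectI allI impI)
  fix i j
  assume "coeff (coeff (p * q) j) i \<noteq> 0"
  then obtain i1 j1 i2 j2 where ij: "i = i1 + i2" "j = j1 + j2"
    and "coeff (coeff p j1) i1 \<noteq> 0" "coeff (coeff q j2) i2 \<noteq> 0"
    by (rule coeff_mult_nonzero)
  with assms obtain a1 c1 a2 c2 where "(a1, c1) \<in> S" "a1 \<le> i1" "c1 \<le> j1"
    and "(a2, c2) \<in> T" "a2 \<le> i2" "c2 \<le> j2"
    unfolding MI_def upset_def by blast
  with ij show "(i, j) \<in> upset (exp_sum S T)"
    unfolding upset_def exp_sum_def
    by (intro CollectI case_prodI exI[of _ "a1 + a2"] exI[of _ "c1 + c2"]) auto
qed

lemma MI_mult: "ideal_mult (MI S) (MI T) = (MI (exp_sum S T) :: 'a::comm_ring_1 poly poly set)"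
proof
  show "ideal_mult (MI S) (MI T) \<subseteq> (MI (exp_sum S T) :: 'a poly poly set)"
    unfolding ideal_mult_def by (intro ideal_gen_least MI_ideal) (auto intro: MI_mult_elements)
  have "mon a c \<in> (ideal_mult (MI S) (MI T) :: 'a poly poly set)" if "(a, c) \<in> exp_sum S T" for a c
    using that unfolding exp_sum_def
    by (auto simp flip: mon_mult intro!: ideal_mult_in mon_in_MI)
  then show "MI (exp_sum S T) \<subseteq> (ideal_mult (MI S) (MI T) :: 'a poly poly set)"
    unfolding MI_eq_gen[of "exp_sum S T"] by (intro ideal_gen_least ideal_mult_ideal) auto
qed

text \<open>Colon by a monomial: f x^a y^c lies in MI G iff f lies in the monomial ideal of the
  exponents of G shifted down by (a, c) (truncated at 0).\<close>

definition exp_shift :: "nat \<Rightarrow> nat \<Rightarrow> (nat \<times> nat) set \<Rightarrow> (nat \<times> nat) set" where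
  "exp_shift a c G = (\<lambda>(p, q). (p - a, q - c)) ` G"

lemma upset_shift_iff: "(i + a, j + c) \<in> upset G \<longleftrightarrow> (i, j) \<in> upset (exp_shift a c G)"
  unfolding upset_def exp_shift_def by force

lemma mult_mon_in_MI_iff:
  "f * mon a c \<in> MI G \<longleftrightarrow> (f :: 'a::comm_ring_1 poly poly) \<in> MI (exp_shift a c G)"
proof -
  have "f * mon a c \<in> MI G \<longleftrightarrow>
      (\<forall>i j. coeff (coeff f j) i \<noteq> 0 \<longrightarrow> (i + a, j + c) \<in> upset G)"
  proof
    assume prod: "f * mon a c \<in> MI G"
    show "\<forall>i j. coeff (coeff f j) i \<noteq> 0 \<longrightarrow> (i + a, j + c) \<in> upset G"
    proof (intro allI impI)
      fix i j
      assume "coeff (coeff f j) i \<noteq> 0"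
      then have "coeff (coeff (f * mon a c) (j + c)) (i + a) \<noteq> 0"
        by (simp add: coeff_mult_mon)
      with prod show "(i + a, j + c) \<in> upset G"
        unfolding MI_def by blast
    qed
  next
    assume shifted: "\<forall>i j. coeff (coeff f j) i \<noteq> 0 \<longrightarrow> (i + a, j + c) \<in> upset G"
    show "f * mon a c \<in> MI G"
      unfolding MI_def
    proof (intro CollectI allI impI)
      fix i j
      assume "coeff (coeff (f * mon a c) j) i \<noteq> 0"
      then have "a \<le> i" "c \<le> j" "coeff (coeff f (j - c)) (i - a) \<noteq> 0"
        by (simp_all add: coeff_mult_mon split: if_splits)
      with shifted show "(i, j) \<in> upset G"
        by (metis le_add_diff_inverse2)
    qed
  qed
  then show ?thesis
    unfolding upset_shift_iff MI_def by simp
qed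

section \<open>Colon ideals of equigenerated monomial ideals\<close>

text \<open>Staircase lemma: exponents lying on the two coordinate axes, meeting both of them,
  generate the same up-set as the two smallest ones (s, 0) and (0, t).\<close>

lemma upset_on_axes:
  assumes axes: "\<And>p q. (p, q) \<in> S \<Longrightarrow> p = 0 \<or> q = 0"
    and "(x0, 0) \<in> S" "(0, y0) \<in> S"
  shows "\<exists>s t. upset S = upset {(s, 0), (0, t)}"
proof -
  define s where "s = (LEAST x. (x, 0) \<in> S)"
  define t where "t = (LEAST y. (0, y) \<in> S)"
  have st: "(s, 0) \<in> S" "(0, t) \<in> S"
    unfolding s_def t_def using assms(2,3) by (auto intro: LeastI)
  have "(p, q) \<in> upset {(s, 0), (0, t)}" if "(p, q) \<in> S" for p q
    using axes[OF that]
  proof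
    assume "p = 0"
    with that have "t \<le> q" unfolding t_def by (simp add: Least_le)
    then show ?thesis by (auto simp: upset_def)
  next
    assume "q = 0"
    with that have "s \<le> p" unfolding s_def by (simp add: Least_le)
    then show ?thesis by (auto simp: upset_def)
  qed
  then have "upset S \<subseteq> upset {(s, 0), (0, t)}"
    by (rule upset_least)
  moreover have "upset {(s, 0), (0, t)} \<subseteq> upset S"
    using st by (intro upset_least) (auto intro: upset_base)
  ultimately show ?thesis by blast
qed

lemma colon_equigenerated:
  assumes degree: "\<And>p q. (p, q) \<in> G \<Longrightarrow> p + q = a + c"
    and T: "(a, c) \<in> T" "T \<subseteq> insert (a, c) G"
    and left: "(p1, q1) \<in> G" "a \<le> p1"
    and right: "(p2, q2) \<in> G" "c \<le> q2"
  shows "\<exists>s t. ideal_colon (MI G) (MI T) = (MI {(s, 0), (0, t)} :: 'a::comm_ring_1 poly poly set)"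
proof -
  have "ideal_colon (MI G) (MI T) = {f :: 'a poly poly. f * mon a c \<in> MI G}"
  proof (intro set_eqI)
    fix f :: "'a poly poly"
    have "f * mon p q \<in> MI G" if "(p, q) \<in> G" for p q
      using ideal_mult_left[OF MI_ideal mon_in_MI[OF that], of f] by (simp add: mult.commute)
    then show "f \<in> ideal_colon (MI G) (MI T) \<longleftrightarrow> f \<in> {f. f * mon a c \<in> MI G}"
      unfolding MI_eq_gen[of T] ideal_colon_gen_iff[OF MI_ideal] using T by auto
  qed
  also have "\<dots> = MI (exp_shift a c G)"
    by (simp add: mult_mon_in_MI_iff)
  finally have colon: "ideal_colon (MI G) (MI T) = (MI (exp_shift a c G) :: 'a poly poly set)" .
  have "\<exists>s t. upset (exp_shift a c G) = upset {(s, 0), (0, t)}"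
  proof (rule upset_on_axes)
    fix p q
    assume "(p, q) \<in> exp_shift a c G"
    then obtain p' q' where "(p', q') \<in> G" "p = p' - a" "q = q' - c"
      unfolding exp_shift_def by auto
    with degree[of p' q'] show "p = 0 \<or> q = 0" by linarith
  next
    have "q1 - c = 0" using left degree[OF left(1)] by linarith
    with left(1) show "(p1 - a, 0) \<in> exp_shift a c G"
      unfolding exp_shift_def by (auto intro!: image_eqI[of _ _ "(p1, q1)"])
  next
    have "p2 - a = 0" using right degree[OF right(1)] by linarith
    with right(1) show "(0, q2 - c) \<in> exp_shift a c G"
      unfolding exp_shift_def by (auto intro!: image_eqI[of _ _ "(p2, q2)"])
  qed
  then obtain s t where "upset (exp_shift a c G) = upset {(s, 0), (0, t)}"
    by blast
  then have "(MI (exp_shift a c G) :: 'a poly poly set) = MI {(s, 0), (0, t)}"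
    unfolding MI_def by simp
  with colon show ?thesis by blast
qed

section \<open>The exponent sets of I^n and J I^n\<close>

definition exps_J :: "nat \<Rightarrow> (nat \<times> nat) set" where
  "exps_J d = {(d, 0), (0, d)}"

definition exps_I :: "nat \<Rightarrow> nat \<Rightarrow> (nat \<times> nat) set" where
  "exps_I d b = {(d, 0), (0, d), (b, d - b)}"

text \<open>Exponents of the generators of I^n: products of i copies of x^d, j of y^d and
  k of x^b y^(d-b).\<close>

definition exps_pow :: "nat \<Rightarrow> nat \<Rightarrow> nat \<Rightarrow> (nat \<times> nat) set" where
  "exps_pow d b n = {(d * i + b * k, d * j + (d - b) * k) | i j k. i + j + k = n}"

lemma exps_pow_memI: "i + j + k = n \<Longrightarrow> (d * i + b * k, d * j + (d - b) * k) \<in> exps_pow d b n"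
  unfolding exps_pow_def by blast

lemma exps_pow_memE:
  assumes "u \<in> exps_pow d b n"
  obtains i j k where "u = (d * i + b * k, d * j + (d - b) * k)" "i + j + k = n"
  using assms unfolding exps_pow_def by blast

lemma exps_pow_0: "exps_pow d b 0 = {(0, 0)}"
  by (auto simp: exps_pow_def)

text \<open>A generator of I^(n+1) is a generator of I times one of I^n, and conversely:
  remove one factor x^d, y^d or x^b y^(d-b) from it.\<close>

lemma exps_pow_Suc: "exps_pow d b (Suc n) = exp_sum (exps_I d b) (exps_pow d b n)"
proof
  show "exp_sum (exps_I d b) (exps_pow d b n) \<subseteq> exps_pow d b (Suc n)"
  proof
    fix u assume "u \<in> exp_sum (exps_I d b) (exps_pow d b n)"
    then obtain a c i j k where ijk: "i + j + k = n" and ac: "(a, c) \<in> exps_I d b"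
      and u: "u = (a + (d * i + b * k), c + (d * j + (d - b) * k))"
      unfolding exp_sum_def exps_pow_def by blast
    from ac consider "u = (d * Suc i + b * k, d * j + (d - b) * k)"
      | "u = (d * i + b * k, d * Suc j + (d - b) * k)"
      | "u = (d * i + b * Suc k, d * j + (d - b) * Suc k)"
      unfolding exps_I_def u by auto
    then show "u \<in> exps_pow d b (Suc n)"
      by cases (use ijk in \<open>simp_all only: exps_pow_memI\<close>)
  qed
  show "exps_pow d b (Suc n) \<subseteq> exp_sum (exps_I d b) (exps_pow d b n)"
  proof
    fix u assume "u \<in> exps_pow d b (Suc n)"
    then obtain i j k where u: "u = (d * i + b * k, d * j + (d - b) * k)" "i + j + k = Suc n"
      by (rule exps_pow_memE)
    consider i' where "i = Suc i'" | j' where "j = Suc j'" | k' where "k = Suc k'"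
      using u(2) by (metis add_is_0 not0_implies_Suc)
    then show "u \<in> exp_sum (exps_I d b) (exps_pow d b n)"
    proof cases
      case 1
      with u have "u = (d + (d * i' + b * k), 0 + (d * j + (d - b) * k))"
        and "(d * i' + b * k, d * j + (d - b) * k) \<in> exps_pow d b n"
        by (simp_all add: exps_pow_memI)
      then show ?thesis by (metis exp_sumI exps_I_def insertCI)
    next
      case 2
      with u have "u = (0 + (d * i + b * k), d + (d * j' + (d - b) * k))"
        and "(d * i + b * k, d * j' + (d - b) * k) \<in> exps_pow d b n"
        by (simp_all add: exps_pow_memI)
      then show ?thesis by (metis exp_sumI exps_I_def insertCI)
    next
      case 3
      with u have "u = (b + (d * i + b * k'), (d - b) + (d * j + (d - b) * k'))"
        and "(d * i + b * k', d * j + (d - b) * k') \<in> exps_pow d b n"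
        by (simp_all add: exps_pow_memI)
      then show ?thesis by (metis exp_sumI exps_I_def insertCI)
    qed
  qed
qed

lemma ideal_J_eq: "ideal_gen {var_x ^ d, var_y ^ d} = (MI (exps_J d) :: 'a::comm_ring_1 poly poly set)"
  by (simp add: MI_eq_gen exps_J_def var_x_pow var_y_pow)

lemma ideal_I_eq:
  "ideal_gen {var_x ^ d, var_y ^ d, var_x ^ b * var_y ^ (d - b)}
     = (MI (exps_I d b) :: 'a::comm_ring_1 poly poly set)"
  by (simp add: MI_eq_gen exps_I_def var_x_pow var_y_pow mon_mult)

lemma ideal_pow_MI: "ideal_pow (MI (exps_I d b)) n = (MI (exps_pow d b n) :: 'a::comm_ring_1 poly poly set)"
  by (induction n) (simp_all add: exps_pow_0 MI_unit exps_pow_Suc MI_mult)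

lemma exps_JI_degree:
  assumes "b \<le> d" "(p, q) \<in> exp_sum (exps_J d) (exps_pow d b n)"
  shows "p + q = b * Suc n + (d - b) * Suc n"
proof -
  have split_d: "b * m + (d - b) * m = d * m" for m
    using assms(1) by (simp flip: add_mult_distrib)
  from assms(2) obtain a c i j k where "(a, c) \<in> exps_J d" "i + j + k = n"
    and "p = a + (d * i + b * k)" "q = c + (d * j + (d - b) * k)"
    unfolding exp_sum_def exps_pow_def by blast
  then have "p + q = d + d * (i + j) + (b * k + (d - b) * k)"
    unfolding exps_J_def by (auto simp: algebra_simps)
  also have "\<dots> = d + d * (i + j) + d * k"
    by (simp only: split_d)
  also have "\<dots> = d * Suc n"
    unfolding \<open>i + j + k = n\<close>[symmetric] by (simp add: algebra_simps)
  finally show ?thesis by (simp only: split_d)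
qed

lemma exps_pow_Suc_split:
  "exps_pow d b (Suc n) \<subseteq> insert (b * Suc n, (d - b) * Suc n) (exp_sum (exps_J d) (exps_pow d b n))"
proof
  fix u assume "u \<in> exps_pow d b (Suc n)"
  then obtain i j k where u: "u = (d * i + b * k, d * j + (d - b) * k)" "i + j + k = Suc n"
    by (rule exps_pow_memE)
  consider i' where "i = Suc i'" | j' where "j = Suc j'" | "i = 0" "j = 0"
    by (metis not0_implies_Suc)
  then show "u \<in> insert (b * Suc n, (d - b) * Suc n) (exp_sum (exps_J d) (exps_pow d b n))"
  proof cases
    case 1
    with u have "u = (d + (d * i' + b * k), 0 + (d * j + (d - b) * k))"
      and "(d * i' + b * k, d * j + (d - b) * k) \<in> exps_pow d b n"
      by (simp_all add: exps_pow_memI)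
    then show ?thesis by (metis exp_sumI exps_J_def insertCI)
  next
    case 2
    with u have "u = (0 + (d * i + b * k), d + (d * j' + (d - b) * k))"
      and "(d * i + b * k, d * j' + (d - b) * k) \<in> exps_pow d b n"
      by (simp_all add: exps_pow_memI)
    then show ?thesis by (metis exp_sumI exps_J_def insertCI)
  qed (use u in simp)
qed

lemma exps_JI_witnesses:
  "(d + b * n, (d - b) * n) \<in> exp_sum (exps_J d) (exps_pow d b n)"
  "(b * n, d + (d - b) * n) \<in> exp_sum (exps_J d) (exps_pow d b n)"
  using exp_sumI[of d 0 "exps_J d" "b * n" "(d - b) * n"]
    exp_sumI[of 0 d "exps_J d" "b * n" "(d - b) * n"] exps_pow_memI[of 0 0 n n d b]
  by (simp_all add: exps_J_def)

theorem mainTheorem9: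
  fixes d b :: nat
  assumes "d \<ge> 2" and "1 \<le> b" and "b \<le> d - 1" and "gcd d b = 1"
  defines "I \<equiv> ideal_gen {var_x ^ d, var_y ^ d, var_x ^ b * var_y ^ (d - b)} :: 'k::field poly poly set"
      and "J \<equiv> ideal_gen {var_x ^ d, var_y ^ d} :: 'k::field poly poly set"
  shows "\<forall>l \<ge> 1. \<exists>s t :: nat.
           ideal_colon (ideal_mult J (ideal_pow I (l - 1))) (ideal_pow I l)
             = ideal_gen {var_x ^ s, var_y ^ t}"
proof (intro allI impI)
  fix l :: nat
  assume "l \<ge> 1"
  then obtain n where l: "l = Suc n"
    using not0_implies_Suc by fastforce
  have "b \<le> d" using assms(3) by simp
  let ?G = "exp_sum (exps_J d) (exps_pow d b n)"
  have ideals: "ideal_mult J (ideal_pow I (l - 1)) = MI ?G" "ideal_pow I l = MI (exps_pow d b l)"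
    unfolding I_def J_def ideal_I_eq ideal_J_eq ideal_pow_MI l by (simp_all add: MI_mult)
  have diag: "(b * l, (d - b) * l) \<in> exps_pow d b l"
    using exps_pow_memI[of 0 0 l l d b] by simp
  have split: "exps_pow d b l \<subseteq> insert (b * l, (d - b) * l) ?G"
    unfolding l by (rule exps_pow_Suc_split)
  have "b * l \<le> d + b * n" "(d - b) * l \<le> d + (d - b) * n"
    using \<open>b \<le> d\<close> by (simp_all add: l)
  then obtain s t where "ideal_colon (MI ?G) (MI (exps_pow d b l)) = (MI {(s, 0), (0, t)} :: 'k poly poly set)"
    using colon_equigenerated[OF exps_JI_degree[OF \<open>b \<le> d\<close>, where n = n, folded l] diag split]
      exps_JI_witnesses by blast
  then show "\<exists>s t. ideal_colon (ideal_mult J (ideal_pow I (l - 1))) (ideal_pow I l)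
      = ideal_gen {var_x ^ s, var_y ^ t}"
    unfolding ideals by (auto simp: MI_eq_gen var_x_pow var_y_pow)
qed

end
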